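(* Let $\mathcal N_1,\mathcal N_2,\mathcal N_3$ be nested graphs and let $\phi:\mathcal N_1\to\mathcal N_2$ and $\psi:\mathcal N_2\to\mathcal N_3$ be admissible functors. Then the composite $\psi\circ\phi:\mathcal N_1\to\mathcal N_3$ is admissible.
   Context: A nested graph is a small category $\mathcal N$ for which there exists at least one functor $G:\mathcal N\to\underline n$ to a finite ordinal $\underline n$ (viewed as the category with a unique morphism $i\to j$ when $i\le j$ and none otherwise) sending every non-identity morphism to a non-identity morphism. Objects of a nested graph are called nodes. A flag is a non-identity morphism; a flag is said to be decorated by its domain. A flag is irreducible if it cannot be written as a composite of two flags. A functor $\phi:\mathcal N_1\to\mathcal N_2$ contracts a flag $f$ if $\phi(f)$ is an identity. A functor $\phi:\mathcal N_1\to\mathcal N_2$ between nested graphs is admissible if (1) for every irreducible flag $f$ of $\mathcal N_1$, $\phi(f)$ is either an identity or an irreducible flag, and (2) for every irreducible flag $f:A\to B$ of $\mathcal N_1$, if $\phi$ contracts $f$ then $\phi$ contracts every irreducible flag decorated by $A$ (i.e. with domain $A$). *)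

theory Defs
  imports Main
begin

text \<open>Small categories, presented by a set of objects, a set of arrows,
  domain/codomain maps, identities and composition (cComp g f = g o f,
  defined when cCod f = cDom g).\<close>

record ('o, 'm) cat =
  cObj  :: "'o set"
  cArr  :: "'m set"
  cDom  :: "'m \<Rightarrow> 'o"
  cCod  :: "'m \<Rightarrow> 'o"
  cId   :: "'o \<Rightarrow> 'm"
  cComp :: "'m \<Rightarrow> 'm \<Rightarrow> 'm"

definition category :: "('o, 'm) cat \<Rightarrow> bool" where
  "category C \<longleftrightarrow>
     (\<forall>f\<in>cArr C. cDom C f \<in> cObj C \<and> cCod C f \<in> cObj C) \<and>
     (\<forall>a\<in>cObj C. cId C a \<in> cArr C \<and> cDom C (cId C a) = a \<and> cCod C (cId C a) = a) \<and>
     (\<forall>f\<in>cArr C. \<forall>g\<in>cArr C. cCod C f = cDom C g \<longrightarrow>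
        cComp C g f \<in> cArr C \<and> cDom C (cComp C g f) = cDom C f \<and> cCod C (cComp C g f) = cCod C g) \<and>
     (\<forall>f\<in>cArr C. cComp C (cId C (cCod C f)) f = f \<and> cComp C f (cId C (cDom C f)) = f) \<and>
     (\<forall>f\<in>cArr C. \<forall>g\<in>cArr C. \<forall>h\<in>cArr C. cCod C f = cDom C g \<longrightarrow> cCod C g = cDom C h \<longrightarrow>
        cComp C h (cComp C g f) = cComp C (cComp C h g) f)"

definition is_functor :: "('a, 'b) cat \<Rightarrow> ('c, 'd) cat \<Rightarrow> ('a \<Rightarrow> 'c) \<Rightarrow> ('b \<Rightarrow> 'd) \<Rightarrow> bool" where
  "is_functor C D Fo Fa \<longleftrightarrow>
     (\<forall>a\<in>cObj C. Fo a \<in> cObj D) \<and>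
     (\<forall>f\<in>cArr C. Fa f \<in> cArr D \<and> cDom D (Fa f) = Fo (cDom C f) \<and> cCod D (Fa f) = Fo (cCod C f)) \<and>
     (\<forall>a\<in>cObj C. Fa (cId C a) = cId D (Fo a)) \<and>
     (\<forall>f\<in>cArr C. \<forall>g\<in>cArr C. cCod C f = cDom C g \<longrightarrow> Fa (cComp C g f) = cComp D (Fa g) (Fa f))"

definition ord_cat :: "nat \<Rightarrow> (nat, nat \<times> nat) cat" where
  "ord_cat n = \<lparr> cObj = {..<n}, cArr = {(i, j). i \<le> j \<and> j < n},
                 cDom = fst, cCod = snd, cId = (\<lambda>i. (i, i)),
                 cComp = (\<lambda>g f. (fst f, snd g)) \<rparr>"

definition is_identity :: "('o, 'm) cat \<Rightarrow> 'm \<Rightarrow> bool" where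
  "is_identity C f \<longleftrightarrow> f = cId C (cDom C f)"

definition flag :: "('o, 'm) cat \<Rightarrow> 'm \<Rightarrow> bool" where
  "flag C f \<longleftrightarrow> f \<in> cArr C \<and> \<not> is_identity C f"

definition irreducible_flag :: "('o, 'm) cat \<Rightarrow> 'm \<Rightarrow> bool" where
  "irreducible_flag C f \<longleftrightarrow> flag C f \<and>
     \<not> (\<exists>g h. flag C g \<and> flag C h \<and> cCod C h = cDom C g \<and> f = cComp C g h)"

definition nested_graph :: "('o, 'm) cat \<Rightarrow> bool" where
  "nested_graph C \<longleftrightarrow> category C \<and>
     (\<exists>n Go Ga. is_functor C (ord_cat n) Go Ga \<and>
        (\<forall>f. flag C f \<longrightarrow> flag (ord_cat n) (Ga f)))"

definition contracts :: "('c, 'd) cat \<Rightarrow> ('b \<Rightarrow> 'd) \<Rightarrow> 'b \<Rightarrow> bool" where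
  "contracts D Fa f \<longleftrightarrow> is_identity D (Fa f)"

definition admissible ::
  "('a, 'b) cat \<Rightarrow> ('c, 'd) cat \<Rightarrow> ('a \<Rightarrow> 'c) \<Rightarrow> ('b \<Rightarrow> 'd) \<Rightarrow> bool" where
  "admissible C D Fo Fa \<longleftrightarrow> is_functor C D Fo Fa \<and>
     (\<forall>f. irreducible_flag C f \<longrightarrow> is_identity D (Fa f) \<or> irreducible_flag D (Fa f)) \<and>
     (\<forall>f. irreducible_flag C f \<longrightarrow> contracts D Fa f \<longrightarrow>
        (\<forall>f'. irreducible_flag C f' \<and> cDom C f' = cDom C f \<longrightarrow> contracts D Fa f'))"

end

theory Submission
  imports Defs
begin

text \<open>If \<open>\<psi> \<circ> \<phi>\<close> contracts an irreducible flag \<open>f\<close>, either \<open>\<phi>\<close> already contracts \<open>f\<close>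
  (then \<open>\<phi>\<close> contracts every irreducible flag with the same decoration, and so does
  \<open>\<psi> \<circ> \<phi>\<close>), or \<open>\<phi> f\<close> is an irreducible flag contracted by \<open>\<psi>\<close>. In the latter case
  every irreducible flag \<open>f'\<close> decorated like \<open>f\<close> is either contracted by \<open>\<phi>\<close>, or
  \<open>\<phi> f'\<close> is an irreducible flag decorated like \<open>\<phi> f\<close>, hence contracted by \<open>\<psi>\<close>.\<close>

lemma is_functor_comp:
  assumes "is_functor C D Fo Fa" and "is_functor D E Go Ga"
  shows "is_functor C E (Go \<circ> Fo) (Ga \<circ> Fa)"
  using assms unfolding is_functor_def by auto

lemma functor_preserves_identity:
  assumes F: "is_functor C D Fo Fa" and "category C"
    and f: "f \<in> cArr C" and "is_identity C f"
  shows "is_identity D (Fa f)"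
proof -
  have dom: "cDom C f \<in> cObj C"
    using \<open>category C\<close> f unfolding category_def by blast
  have "Fa f = cId D (Fo (cDom C f))"
    using F dom \<open>is_identity C f\<close> unfolding is_functor_def is_identity_def by metis
  also have "Fo (cDom C f) = cDom D (Fa f)"
    using F f unfolding is_functor_def by metis
  finally show ?thesis unfolding is_identity_def .
qed

lemma irreducible_flag_arr: "irreducible_flag C f \<Longrightarrow> f \<in> cArr C"
  unfolding irreducible_flag_def flag_def by blast

lemma admissible_comp:
  assumes "category D"
    and \<phi>: "admissible C D \<phi>o \<phi>a" and \<psi>: "admissible D E \<psi>o \<psi>a"
  shows "admissible C E (\<psi>o \<circ> \<phi>o) (\<psi>a \<circ> \<phi>a)"
proof -
  have F: "is_functor C D \<phi>o \<phi>a" and G: "is_functor D E \<psi>o \<psi>a"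
    using \<phi> \<psi> unfolding admissible_def by auto
  have image_\<phi>: "is_identity D (\<phi>a f) \<or> irreducible_flag D (\<phi>a f)"
    if "irreducible_flag C f" for f
    using \<phi> that unfolding admissible_def by blast
  have image_\<psi>: "is_identity E (\<psi>a g) \<or> irreducible_flag E (\<psi>a g)"
    if "irreducible_flag D g" for g
    using \<psi> that unfolding admissible_def by blast
  have decoration_\<phi>: "contracts D \<phi>a f'"
    if "irreducible_flag C f" "contracts D \<phi>a f" "irreducible_flag C f'" "cDom C f' = cDom C f"
    for f f'
    using \<phi> that unfolding admissible_def by blast
  have decoration_\<psi>: "contracts E \<psi>a g'"
    if "irreducible_flag D g" "contracts E \<psi>a g" "irreducible_flag D g'" "cDom D g' = cDom D g"
    for g g'
    using \<psi> that unfolding admissible_def by blast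
  have \<psi>_after_\<phi>: "is_identity E (\<psi>a (\<phi>a f))"
    if "irreducible_flag C f" and "is_identity D (\<phi>a f)" for f
  proof -
    have "\<phi>a f \<in> cArr D"
      using F irreducible_flag_arr[OF \<open>irreducible_flag C f\<close>] unfolding is_functor_def by blast
    then show ?thesis
      using functor_preserves_identity[OF G \<open>category D\<close>] \<open>is_identity D (\<phi>a f)\<close> by blast
  qed
  have irreducible: "is_identity E ((\<psi>a \<circ> \<phi>a) f) \<or> irreducible_flag E ((\<psi>a \<circ> \<phi>a) f)"
    if "irreducible_flag C f" for f
    using image_\<phi>[OF that] image_\<psi> \<psi>_after_\<phi>[OF that] by auto
  have decoration: "contracts E (\<psi>a \<circ> \<phi>a) f'"
    if f: "irreducible_flag C f" and c: "contracts E (\<psi>a \<circ> \<phi>a) f"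
      and f': "irreducible_flag C f'" and dom: "cDom C f' = cDom C f" for f f'
  proof (cases "contracts D \<phi>a f'")
    case True
    then show ?thesis using \<psi>_after_\<phi>[OF f'] unfolding contracts_def by simp
  next
    case False
    then have irr': "irreducible_flag D (\<phi>a f')"
      using image_\<phi>[OF f'] unfolding contracts_def by blast
    have "\<not> contracts D \<phi>a f" using decoration_\<phi>[OF f _ f' dom] False by blast
    then have irr: "irreducible_flag D (\<phi>a f)"
      using image_\<phi>[OF f] unfolding contracts_def by blast
    have "cDom D (\<phi>a f') = cDom D (\<phi>a f)"
      using F irreducible_flag_arr[OF f] irreducible_flag_arr[OF f'] dom
      unfolding is_functor_def by metis
    moreover have "contracts E \<psi>a (\<phi>a f)" using c unfolding contracts_def by simp
    ultimately have "contracts E \<psi>a (\<phi>a f')" using decoration_\<psi>[OF irr _ irr'] by blast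
    then show ?thesis unfolding contracts_def by simp
  qed
  show ?thesis
    unfolding admissible_def using is_functor_comp[OF F G] irreducible decoration by blast
qed

theorem mainTheorem1:
  fixes N1 :: "('a, 'b) cat" and N2 :: "('c, 'd) cat" and N3 :: "('e, 'f) cat"
    and \<phi>o :: "'a \<Rightarrow> 'c" and \<phi>a :: "'b \<Rightarrow> 'd"
    and \<psi>o :: "'c \<Rightarrow> 'e" and \<psi>a :: "'d \<Rightarrow> 'f"
  assumes "nested_graph N1" and "nested_graph N2" and "nested_graph N3"
    and "admissible N1 N2 \<phi>o \<phi>a"
    and "admissible N2 N3 \<psi>o \<psi>a"
  shows "admissible N1 N3 (\<psi>o \<circ> \<phi>o) (\<psi>a \<circ> \<phi>a)"
proof -
  have "category N2" using \<open>nested_graph N2\<close> unfolding nested_graph_def by blast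
  then show ?thesis using admissible_comp assms(4,5) by blast
qed

end
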